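(* Let $(\varphi_\alpha)_{\alpha>0}$ be a family of functions $\varphi_\alpha\colon(0,\infty)\times\mathbb{R}\to\mathbb{R}$ satisfying (F1)–(F3). Then for every $\alpha>0$: (1) for every $\lambda\in\Lambda$ there exists $s_{\alpha,\lambda}\in\Gamma_0(\mathbb{R})$ with $s_{\alpha,\lambda}\ge s_{\alpha,\lambda}(0)=0$ and $\varphi_\alpha(\kappa_\lambda,\cdot)=\operatorname{prox}_{s_{\alpha,\lambda}}$; (2) $\mathcal{R}_\alpha:=\bigoplus_{\lambda\in\Lambda}s_{\alpha,\lambda}(\kappa_\lambda(\cdot))$ is non-negative and belongs to $\Gamma_0(\ell^2(\Lambda))$; (3) for all $(z_\lambda)_\lambda\in\ell^2(\Lambda)$, $\operatorname{prox}_{\mathcal{R}_\alpha}((z_\lambda)_\lambda)=\big(\operatorname{prox}_{s_{\alpha,\lambda}(\kappa_\lambda(\cdot))}(z_\lambda)\big)_\lambda$; (4) for all $z\in\operatorname{dom}(\mathbf{M}_\kappa^+\circ\Phi_{\alpha,\kappa})$ and every $\gamma>0$, $\mathbf{M}_\kappa^+\circ\Phi_{\alpha,\kappa}(z)$ is the unique minimizer over $x\in\ell^2(\Lambda)$ of $\tfrac12\|\mathbf{M}_\kappa x-z\|^2+\mathcal{R}_\alpha(x)$, and it is the unique fixed point of the operator $\operatorname{prox}_{\gamma\mathcal{R}_\alpha}\circ\big(\mathrm{id}-\gamma\mathbf{M}_\kappa(\mathbf{M}_\kappa(\cdot)-z)\big)$ (note $\mathbf{M}_\kappa(\mathbf{M}_\kappa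 x-z)=\nabla\tfrac12\|\mathbf{M}_\kappa x-z\|^2$).
   Context: $\Lambda$ is an at most countable index set and $\kappa=(\kappa_\lambda)_{\lambda\in\Lambda}\in(0,\infty)^\Lambda$ with $\sup_\lambda\kappa_\lambda<\infty$. $\mathbf{M}_\kappa\colon\ell^2(\Lambda)\to\ell^2(\Lambda)$, $(x_\lambda)_\lambda\mapsto(\kappa_\lambda x_\lambda)_\lambda$; $\mathbf{M}_\kappa^+$ is its Moore–Penrose inverse, with domain $\operatorname{ran}(\mathbf{M}_\kappa)=\{(c_\lambda)\in\ell^2(\Lambda):(c_\lambda/\kappa_\lambda)_\lambda\in\ell^2(\Lambda)\}$ and $\mathbf{M}_\kappa^+((c_\lambda)_\lambda)=(c_\lambda/\kappa_\lambda)_\lambda$. Conditions on $\varphi_\alpha\colon(0,\infty)\times\mathbb{R}\to\mathbb{R}$, required for all $\alpha,\kappa>0$: (F1) $\varphi_\alpha(\kappa,\cdot)$ is monotonically increasing (non-decreasing); (F2) $\varphi_\alpha(\kappa,\cdot)$ is nonexpansive (1-Lipschitz); (F3) $\varphi_\alpha(\kappa,0)=0$. $\Phi_{\alpha,\kappa}\colon\ell^2(\Lambda)\to\ell^2(\Lambda)$, $(c_\lambda)_\lambda\mapsto(\varphi_\alpha(\kappa_\lambda,c_\lambda))_\lambda$, and $\operatorname{dom}(\mathbf{M}_\kappa^+\circ\Phi_{\alpha,\kappa})=\{z\in\ell^2(\Lambda):\Phi_{\alpha,\kappa}(z)\in\operatorname{dom}(\mathbf{M}_\kappa^+)\}$.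 $\Gamma_0(H)$ is the set of proper, convex, lower semi-continuous functionals $H\to\mathbb{R}\cup\{\infty\}$ on a Hilbert space $H$; $\operatorname{prox}_f(x)=\operatorname{argmin}_y\tfrac12\|x-y\|^2+f(y)$. For $r_\lambda\colon\mathbb{R}\to[0,\infty]$, $\bigoplus_\lambda r_\lambda$ is the functional $(x_\lambda)_\lambda\mapsto\sum_\lambda r_\lambda(x_\lambda)$ on $\ell^2(\Lambda)$, and $s(\kappa_\lambda(\cdot))$ denotes $x\mapsto s(\kappa_\lambda x)$. *)

theory Defs
  imports "HOL-Analysis.Analysis"
begin

definition l2 :: "'i set \<Rightarrow> ('i \<Rightarrow> real) set" where
  "l2 \<Lambda> = {x. (\<forall>i. i \<notin> \<Lambda> \<longrightarrow> x i = 0) \<and> (\<lambda>i. (x i)\<^sup>2) summable_on \<Lambda>}"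

definition l2_norm :: "'i set \<Rightarrow> ('i \<Rightarrow> real) \<Rightarrow> real" where
  "l2_norm \<Lambda> x = sqrt (\<Sum>\<^sub>\<infinity>i\<in>\<Lambda>. (x i)\<^sup>2)"

definition Gamma0_real :: "(real \<Rightarrow> ereal) \<Rightarrow> bool" where
  "Gamma0_real f \<longleftrightarrow>
     (\<forall>x. f x \<noteq> -\<infinity>) \<and> (\<exists>x. f x \<noteq> \<infinity>) \<and>
     (\<forall>x y t. 0 < t \<and> t < 1 \<longrightarrow>
        f ((1 - t) * x + t * y) \<le> ereal (1 - t) * f x + ereal t * f y) \<and>
     (\<forall>x X. X \<longlonglongrightarrow> x \<longrightarrow> f x \<le> liminf (\<lambda>n. f (X n)))"

text \<open>Gamma_0(l2(Lambda)); lower semicontinuity w.r.t. the l2 norm (sequential form,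
  equivalent in metric spaces).\<close>
definition Gamma0_l2 :: "'i set \<Rightarrow> (('i \<Rightarrow> real) \<Rightarrow> ereal) \<Rightarrow> bool" where
  "Gamma0_l2 \<Lambda> f \<longleftrightarrow>
     (\<forall>x\<in>l2 \<Lambda>. f x \<noteq> -\<infinity>) \<and> (\<exists>x\<in>l2 \<Lambda>. f x \<noteq> \<infinity>) \<and>
     (\<forall>x\<in>l2 \<Lambda>. \<forall>y\<in>l2 \<Lambda>. \<forall>t. 0 < t \<and> t < 1 \<longrightarrow>
        f (\<lambda>i. (1 - t) * x i + t * y i) \<le> ereal (1 - t) * f x + ereal t * f y) \<and>
     (\<forall>x\<in>l2 \<Lambda>. \<forall>X. (\<forall>n. X n \<in> l2 \<Lambda>) \<and>
        (\<lambda>n. l2_norm \<Lambda> (\<lambda>i. X n i - x i)) \<longlonglongrightarrow> 0 \<longrightarrow>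
        f x \<le> liminf (\<lambda>n. f (X n)))"

definition prox_real :: "(real \<Rightarrow> ereal) \<Rightarrow> real \<Rightarrow> real" where
  "prox_real f x = (THE p. \<forall>y. ereal ((x - p)\<^sup>2 / 2) + f p \<le> ereal ((x - y)\<^sup>2 / 2) + f y)"

definition prox_l2 :: "'i set \<Rightarrow> (('i \<Rightarrow> real) \<Rightarrow> ereal) \<Rightarrow> ('i \<Rightarrow> real) \<Rightarrow> ('i \<Rightarrow> real)" where
  "prox_l2 \<Lambda> f x = (THE p. p \<in> l2 \<Lambda> \<and>
     (\<forall>y\<in>l2 \<Lambda>. ereal ((l2_norm \<Lambda> (\<lambda>i. x i - p i))\<^sup>2 / 2) + f p
                 \<le> ereal ((l2_norm \<Lambda> (\<lambda>i. x i - y i))\<^sup>2 / 2) + f y))"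

definition M_op :: "'i set \<Rightarrow> ('i \<Rightarrow> real) \<Rightarrow> ('i \<Rightarrow> real) \<Rightarrow> ('i \<Rightarrow> real)" where
  "M_op \<Lambda> \<kappa> x = (\<lambda>i. if i \<in> \<Lambda> then \<kappa> i * x i else 0)"

definition M_pinv :: "'i set \<Rightarrow> ('i \<Rightarrow> real) \<Rightarrow> ('i \<Rightarrow> real) \<Rightarrow> ('i \<Rightarrow> real)" where
  "M_pinv \<Lambda> \<kappa> c = (\<lambda>i. if i \<in> \<Lambda> then c i / \<kappa> i else 0)"

definition dom_M_pinv :: "'i set \<Rightarrow> ('i \<Rightarrow> real) \<Rightarrow> ('i \<Rightarrow> real) set" where
  "dom_M_pinv \<Lambda> \<kappa> = {c \<in> l2 \<Lambda>. M_pinv \<Lambda> \<kappa> c \<in> l2 \<Lambda>}"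

definition Phi_op :: "(real \<Rightarrow> real \<Rightarrow> real \<Rightarrow> real) \<Rightarrow> real \<Rightarrow> 'i set \<Rightarrow> ('i \<Rightarrow> real)
    \<Rightarrow> ('i \<Rightarrow> real) \<Rightarrow> ('i \<Rightarrow> real)" where
  "Phi_op \<phi> \<alpha> \<Lambda> \<kappa> c = (\<lambda>i. if i \<in> \<Lambda> then \<phi> \<alpha> (\<kappa> i) (c i) else 0)"

definition Reg :: "'i set \<Rightarrow> ('i \<Rightarrow> real) \<Rightarrow> ('i \<Rightarrow> real \<Rightarrow> ereal) \<Rightarrow> ('i \<Rightarrow> real) \<Rightarrow> ereal" where
  "Reg \<Lambda> \<kappa> s x = (\<Sum>\<^sub>\<infinity>i\<in>\<Lambda>. s i (\<kappa> i * x i))"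

end

theory Submission
  imports Defs
begin

text \<open>A map f on the reals is a proximal map iff it is monotone and nonexpansive. For such f with
  antiderivative \<Psi>, put s p = sup_x ((x - f x) p + (f x)^2/2 - \<Psi> x). The Bregman inequality
  (f x - f y)^2/2 \<le> \<Psi> x - \<Psi> y - f y (x - y) shows that y - f y is a subgradient of s at f y,
  i.e. f = prox_s, and s \<ge> s 0 = 0 when f 0 = 0. Rescaled functions c s(k \<cdot>) have proximal
  points too, because z \<mapsto> c k (z - f z) + f z / k is onto.

  On l2 the regulariser R = \<Sum>_\<lambda> s_\<lambda>(\<kappa>_\<lambda> \<cdot>) is separable. Its proximal map, the minimiser of
  |M_\<kappa> x - z|^2/2 + R x (a proximal problem in the variable M_\<kappa> x) and the fixed points of the
  forward-backward map are therefore all characterised coordinatewise by scalar subgradient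
  inequalities; summing the scalar strong inequalities transfers existence and uniqueness to l2.\<close>

section \<open>Antiderivatives and the Bregman inequality\<close>

lemma DERIV_le_imp_diff_le:
  fixes F G :: "real \<Rightarrow> real"
  assumes "u \<le> v"
    and F: "\<And>t. u \<le> t \<Longrightarrow> t \<le> v \<Longrightarrow> (F has_real_derivative F' t) (at t)"
    and G: "\<And>t. u \<le> t \<Longrightarrow> t \<le> v \<Longrightarrow> (G has_real_derivative G' t) (at t)"
    and le: "\<And>t. u \<le> t \<Longrightarrow> t \<le> v \<Longrightarrow> F' t \<le> G' t"
  shows "F v - F u \<le> G v - G u"
proof -
  have "(\<lambda>t. G t - F t) u \<le> (\<lambda>t. G t - F t) v"
  proof (rule DERIV_nonneg_imp_nondecreasing[OF \<open>u \<le> v\<close>])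
    fix t assume "u \<le> t" "t \<le> v"
    then show "\<exists>y. ((\<lambda>t. G t - F t) has_real_derivative y) (at t) \<and> 0 \<le> y"
      using F G le by (intro exI[of _ "G' t - F' t"] conjI DERIV_diff) auto
  qed
  then show ?thesis by simp
qed

definition antideriv :: "(real \<Rightarrow> real) \<Rightarrow> real \<Rightarrow> real" where
  "antideriv f x = integral {0..x} f - integral {x..0} f"

lemma antideriv_eq_integral_from:
  assumes f: "continuous_on UNIV f" and "a \<le> 0" "a \<le> x"
  shows "antideriv f x = integral {a..x} f - integral {a..0} f"
proof -
  have int: "f integrable_on {u..v}" for u v
    using f by (simp add: continuous_on_subset integrable_continuous_real)
  show ?thesis
  proof (cases "0 \<le> x")
    case True
    then have "integral {x..0} f = 0"
      by (cases "x = 0") auto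
    then show ?thesis
      using Henstock_Kurzweil_Integration.integral_combine[OF \<open>a \<le> 0\<close> True int] by (simp add: antideriv_def)
  next
    case False
    then show ?thesis
      using Henstock_Kurzweil_Integration.integral_combine[of a x 0, OF \<open>a \<le> x\<close> _ int] by (simp add: antideriv_def)
  qed
qed

lemma has_real_derivative_antideriv:
  assumes f: "continuous_on UNIV f"
  shows "(antideriv f has_real_derivative f x) (at x)"
proof -
  define a where "a = min x 0 - 1"
  have "((\<lambda>y. integral {a..y} f - integral {a..0} f) has_real_derivative f x) (at x within {a..x + 1})"
    using integral_has_real_derivative[of a "x + 1" f x] continuous_on_subset[OF f]
    by (auto simp: a_def intro!: derivative_eq_intros)
  then have "(antideriv f has_real_derivative f x) (at x within {a..x + 1})"
    by (rule has_field_derivative_transform_within[where d=1])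
      (auto simp: a_def intro!: antideriv_eq_integral_from[OF f, symmetric])
  then show ?thesis
    using at_within_Icc_at[of a x "x + 1"] by (simp add: a_def)
qed

locale mono_nonexpansive =
  fixes f :: "real \<Rightarrow> real"
  assumes f_mono: "mono f"
    and f_nonexpansive: "\<And>x y. \<bar>f x - f y\<bar> \<le> \<bar>x - y\<bar>"
begin

lemma le_mono: "x \<le> y \<Longrightarrow> f x \<le> f y"
  using f_mono by (simp add: monoD)

lemma diff_le: "x \<le> y \<Longrightarrow> f y - f x \<le> y - x"
  using f_nonexpansive[of y x] by auto

lemma continuous: "continuous_on A f"
proof -
  have "1-lipschitz_on A f"
    by (rule lipschitz_onI) (use f_nonexpansive in \<open>auto simp: dist_real_def\<close>)
  then show ?thesis by (rule lipschitz_on_continuous_on)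
qed

lemma reflect: "mono_nonexpansive (\<lambda>t. - f (- t))"
proof
  show "mono (\<lambda>t. - f (- t))" by (auto intro!: monoI le_mono)
  show "\<bar>- f (- x) - - f (- y)\<bar> \<le> \<bar>x - y\<bar>" for x y
    using f_nonexpansive[of "- y" "- x"] by (simp add: abs_minus_commute)
qed

text \<open>The Bregman distance of an antiderivative P of f dominates (f x - f y)^2/2: between y and x
  the graph of f stays above the constant f y and, by nonexpansiveness, above the line of slope 1
  through (x, f x).\<close>
lemma bregman_ge_of_le:
  assumes P: "\<And>t. (P has_real_derivative f t) (at t)" and "y \<le> x"
  shows "(f x - f y)\<^sup>2 / 2 \<le> P x - P y - f y * (x - y)"
proof -
  define c where "c = f y"
  define d where "d = f x - c"
  define m where "m = x - d"
  have d: "0 \<le> d" "d \<le> x - y"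
    using le_mono[OF \<open>y \<le> x\<close>] diff_le[OF \<open>y \<le> x\<close>] by (auto simp: d_def c_def)
  have "c * m - c * y \<le> P m - P y"
    by (rule DERIV_le_imp_diff_le[where F'="\<lambda>_. c"])
      (use d P in \<open>auto simp: m_def c_def intro!: derivative_eq_intros le_mono\<close>)
  moreover have "(c * x + (x - m)\<^sup>2 / 2) - (c * m + (m - m)\<^sup>2 / 2) \<le> P x - P m"
  proof (rule DERIV_le_imp_diff_le[where F'="\<lambda>t. c + (t - m)"])
    show "c + (t - m) \<le> f t" if "m \<le> t" "t \<le> x" for t
      using diff_le[of t x] that by (auto simp: m_def d_def)
  qed (use d P in \<open>auto simp: m_def intro!: derivative_eq_intros\<close>)
  ultimately show ?thesis
    by (simp add: m_def d_def c_def algebra_simps)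
qed

lemma bregman_ge:
  assumes P: "\<And>t. (P has_real_derivative f t) (at t)"
  shows "(f x - f y)\<^sup>2 / 2 \<le> P x - P y - f y * (x - y)"
proof (cases "y \<le> x")
  case True
  then show ?thesis by (rule bregman_ge_of_le[OF P])
next
  case False
  have "((P \<circ> uminus) has_real_derivative f (- t) * - 1) (at t)" for t
    by (rule DERIV_chain[OF P]) (auto intro!: derivative_eq_intros)
  then have "((\<lambda>t. P (- t)) has_real_derivative - f (- t)) (at t)" for t
    by (simp add: o_def)
  from mono_nonexpansive.bregman_ge_of_le[OF reflect this, of "- y" "- x"] False
  show ?thesis by (simp add: power2_commute algebra_simps)
qed

end

section \<open>Subgradients and scalar proximal points\<close>

definition is_subgradient :: "(real \<Rightarrow> ereal) \<Rightarrow> real \<Rightarrow> real \<Rightarrow> bool" where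
  "is_subgradient g t v \<longleftrightarrow> (\<exists>r. g t = ereal r \<and> (\<forall>y. ereal (r + v * (y - t)) \<le> g y))"

lemma is_subgradient_strong_min:
  assumes "is_subgradient g t (w - t)"
  shows "ereal ((w - t)\<^sup>2 / 2) + g t + ereal ((y - t)\<^sup>2 / 2) \<le> ereal ((w - y)\<^sup>2 / 2) + g y"
proof -
  obtain r where gt: "g t = ereal r" and sub: "\<And>y. ereal (r + (w - t) * (y - t)) \<le> g y"
    using assms by (auto simp: is_subgradient_def)
  have sq: "(w - y)\<^sup>2 / 2 = (w - t)\<^sup>2 / 2 - (w - t) * (y - t) + (y - t)\<^sup>2 / 2"
    by (simp add: power2_eq_square field_simps)
  show ?thesis
  proof (cases "g y")
    case (real gy)
    then have "r + (w - t) * (y - t) \<le> gy"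
      using sub[of y] by simp
    then have "(w - t)\<^sup>2 / 2 + r + (y - t)\<^sup>2 / 2 \<le> (w - y)\<^sup>2 / 2 + gy"
      unfolding sq by linarith
    then show ?thesis
      using real gt by simp
  qed (use sub[of y] in auto)
qed

lemma prox_real_eqI:
  assumes "is_subgradient g t (w - t)"
  shows "prox_real g w = t"
  unfolding prox_real_def
proof (rule the_equality)
  show "\<forall>y. ereal ((w - t)\<^sup>2 / 2) + g t \<le> ereal ((w - y)\<^sup>2 / 2) + g y"
  proof
    fix y
    have "ereal ((w - t)\<^sup>2 / 2) + g t \<le> ereal ((w - t)\<^sup>2 / 2) + g t + ereal ((y - t)\<^sup>2 / 2)"
      by (rule ereal_le_add_self) simp
    also have "\<dots> \<le> ereal ((w - y)\<^sup>2 / 2) + g y"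
      by (rule is_subgradient_strong_min[OF assms])
    finally show "ereal ((w - t)\<^sup>2 / 2) + g t \<le> ereal ((w - y)\<^sup>2 / 2) + g y" .
  qed
next
  fix p assume min: "\<forall>y. ereal ((w - p)\<^sup>2 / 2) + g p \<le> ereal ((w - y)\<^sup>2 / 2) + g y"
  obtain r where gt: "g t = ereal r"
    using assms by (auto simp: is_subgradient_def)
  have "ereal ((w - t)\<^sup>2 / 2) + g t + ereal ((p - t)\<^sup>2 / 2) \<le> ereal ((w - t)\<^sup>2 / 2) + g t"
    using is_subgradient_strong_min[OF assms, of p] min[rule_format, of t] by (rule order_trans)
  then have "(p - t)\<^sup>2 \<le> 0"
    using gt by simp
  then show "p = t" by simp
qed

lemma is_subgradient_prox_real:
  assumes "is_subgradient g t (w - t)"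
  shows "is_subgradient g (prox_real g w) (w - prox_real g w)"
  using assms by (simp add: prox_real_eqI)

lemma prox_real_abs_le:
  assumes "is_subgradient g t (w - t)" and "g 0 = 0" and "0 \<le> g t"
  shows "\<bar>t\<bar> \<le> \<bar>w\<bar>"
proof -
  obtain r where gt: "g t = ereal r"
    using assms(1) by (auto simp: is_subgradient_def)
  have "(w - t)\<^sup>2 / 2 + r + t\<^sup>2 / 2 \<le> w\<^sup>2 / 2"
    using is_subgradient_strong_min[OF assms(1), of 0] assms(2) gt by simp
  moreover have "(w - t)\<^sup>2 / 2 + t\<^sup>2 / 2 - w\<^sup>2 / 2 = t * t - w * t"
    by (simp add: power2_eq_square field_simps)
  moreover have "0 \<le> r"
    using \<open>0 \<le> g t\<close> gt by simp
  ultimately have "t * t \<le> w * t"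
    by linarith
  also have "\<dots> \<le> \<bar>w\<bar> * \<bar>t\<bar>"
    by (simp add: abs_mult[symmetric])
  finally have "\<bar>t\<bar> * \<bar>t\<bar> \<le> \<bar>w\<bar> * \<bar>t\<bar>"
    by (simp only: abs_mult_self)
  from mult_right_le_imp_le[OF this] show ?thesis
    by (cases "t = 0") simp_all
qed

lemma ereal_le_mult_iff:
  "0 < c \<Longrightarrow> ereal (c * a) \<le> ereal c * X \<longleftrightarrow> ereal a \<le> X"
  by (cases X) auto

lemma is_subgradient_scaled_iff:
  assumes c: "0 < c" and k: "0 < k"
  shows "is_subgradient (\<lambda>y. ereal c * g (k * y)) t u \<longleftrightarrow> is_subgradient g (k * t) (u / (c * k))"
proof -
  have affine: "c * (r + u / (c * k) * (k * y - k * t)) = c * r + u * (y - t)" for r y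
    using c k by (simp add: field_simps)
  have "(\<forall>y. ereal (c * r + u * (y - t)) \<le> ereal c * g (k * y)) \<longleftrightarrow>
        (\<forall>q. ereal (r + u / (c * k) * (q - k * t)) \<le> g q)" for r
  proof safe
    fix q assume "\<forall>y. ereal (c * r + u * (y - t)) \<le> ereal c * g (k * y)"
    then have "ereal (c * (r + u / (c * k) * (k * (q / k) - k * t))) \<le> ereal c * g (k * (q / k))"
      unfolding affine by blast
    then show "ereal (r + u / (c * k) * (q - k * t)) \<le> g q"
      using k by (simp add: ereal_le_mult_iff[OF c])
  next
    fix y assume "\<forall>q. ereal (r + u / (c * k) * (q - k * t)) \<le> g q"
    then have "ereal (c * (r + u / (c * k) * (k * y - k * t))) \<le> ereal c * g (k * y)"
      by (simp add: ereal_le_mult_iff[OF c])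
    then show "ereal (c * r + u * (y - t)) \<le> ereal c * g (k * y)"
      unfolding affine .
  qed
  moreover have "ereal c * g (k * t) = ereal r' \<longleftrightarrow> (\<exists>r. g (k * t) = ereal r \<and> r' = c * r)" for r'
    using c by (cases "g (k * t)") (auto simp: field_simps)
  ultimately show ?thesis
    unfolding is_subgradient_def by auto
qed

section \<open>The proximal potential of a monotone nonexpansive map\<close>

lemma Gamma0_real_SUP_affine:
  fixes a b :: "'a \<Rightarrow> real"
  assumes "(SUP x. ereal (a x * p0 + b x)) \<noteq> \<infinity>"
  shows "Gamma0_real (\<lambda>p. SUP x. ereal (a x * p + b x))"
  unfolding Gamma0_real_def
proof (intro conjI allI impI)
  fix p
  have "ereal (a undefined * p + b undefined) \<le> (SUP x. ereal (a x * p + b x))"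
    by (rule SUP_upper) simp
  then show "(SUP x. ereal (a x * p + b x)) \<noteq> - \<infinity>"
    by auto
next
  show "\<exists>p. (SUP x. ereal (a x * p + b x)) \<noteq> \<infinity>"
    using assms by blast
next
  fix p q t :: real assume t: "0 < t \<and> t < 1"
  show "(SUP x. ereal (a x * ((1 - t) * p + t * q) + b x))
      \<le> ereal (1 - t) * (SUP x. ereal (a x * p + b x)) + ereal t * (SUP x. ereal (a x * q + b x))"
  proof (rule SUP_least)
    fix x
    have "ereal (a x * ((1 - t) * p + t * q) + b x)
        = ereal (1 - t) * ereal (a x * p + b x) + ereal t * ereal (a x * q + b x)"
      by (simp add: algebra_simps)
    also have "\<dots> \<le> ereal (1 - t) * (SUP x. ereal (a x * p + b x)) + ereal t * (SUP x. ereal (a x * q + b x))"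
      by (intro add_mono ereal_mult_left_mono SUP_upper) (use t in auto)
    finally show "ereal (a x * ((1 - t) * p + t * q) + b x)
        \<le> ereal (1 - t) * (SUP x. ereal (a x * p + b x)) + ereal t * (SUP x. ereal (a x * q + b x))" .
  qed
next
  fix p and P :: "nat \<Rightarrow> real" assume P: "P \<longlonglongrightarrow> p"
  show "(SUP x. ereal (a x * p + b x)) \<le> liminf (\<lambda>n. SUP x. ereal (a x * P n + b x))"
  proof (rule SUP_least)
    fix x
    have "(\<lambda>n. ereal (a x * P n + b x)) \<longlonglongrightarrow> ereal (a x * p + b x)"
      by (intro tendsto_intros P)
    then have "liminf (\<lambda>n. ereal (a x * P n + b x)) = ereal (a x * p + b x)"
      by (intro lim_imp_Liminf) auto
    then have "ereal (a x * p + b x) = liminf (\<lambda>n. ereal (a x * P n + b x))" ..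
    also have "\<dots> \<le> liminf (\<lambda>n. SUP x. ereal (a x * P n + b x))"
      by (intro Liminf_mono always_eventually allI SUP_upper) simp
    finally show "ereal (a x * p + b x) \<le> liminf (\<lambda>n. SUP x. ereal (a x * P n + b x))" .
  qed
qed

lemma continuous_expanding_surj:
  fixes g :: "real \<Rightarrow> real"
  assumes g: "continuous_on UNIV g" and m: "0 < m"
    and expanding: "\<And>x y. x \<le> y \<Longrightarrow> m * (y - x) \<le> g y - g x"
  shows "surj g"
proof -
  have "\<exists>x. g x = w" for w
  proof (cases "g 0 \<le> w")
    case True
    have "w \<le> g ((w - g 0) / m)"
      using expanding[of 0 "(w - g 0) / m"] True m by simp
    then show ?thesis
      using IVT'[of g 0 w "(w - g 0) / m"] True m continuous_on_subset[OF g] by force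
  next
    case False
    have "g ((w - g 0) / m) \<le> w"
      using expanding[of "(w - g 0) / m" 0] False m by (simp add: divide_nonpos_pos)
    then show ?thesis
      using IVT'[of g "(w - g 0) / m" w 0] False m continuous_on_subset[OF g]
      by (force simp: divide_nonpos_pos)
  qed
  then show ?thesis by (metis surjI)
qed

text \<open>With \<Psi> = antideriv f, on the range of f this is \<Psi>* - p^2/2 (\<Psi>* the convex conjugate),
  the function whose proximal map is \<Psi>' = f; as a supremum of functions affine in p it is
  automatically convex and lower semicontinuous.\<close>
definition prox_potential :: "(real \<Rightarrow> real) \<Rightarrow> real \<Rightarrow> ereal" where
  "prox_potential f p = (SUP x. ereal ((x - f x) * p + ((f x)\<^sup>2 / 2 - antideriv f x)))"

context mono_nonexpansive
begin

lemma prox_potential_ge: "ereal ((x - f x) * p + ((f x)\<^sup>2 / 2 - antideriv f x)) \<le> prox_potential f p"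
  unfolding prox_potential_def by (rule SUP_upper) simp

lemma prox_potential_at_le:
  "prox_potential f (f y) \<le> ereal ((y - f y) * f y + ((f y)\<^sup>2 / 2 - antideriv f y))"
  unfolding prox_potential_def
proof (rule SUP_least)
  fix x
  have "(f x - f y)\<^sup>2 / 2 \<le> antideriv f x - antideriv f y - f y * (x - y)"
    by (rule bregman_ge[OF has_real_derivative_antideriv[OF continuous]])
  moreover have "((x - f x) * f y + ((f x)\<^sup>2 / 2 - antideriv f x))
      - ((y - f y) * f y + ((f y)\<^sup>2 / 2 - antideriv f y))
      = (f x - f y)\<^sup>2 / 2 - (antideriv f x - antideriv f y - f y * (x - y))"
    by (simp add: power2_eq_square field_simps)
  ultimately have "(x - f x) * f y + ((f x)\<^sup>2 / 2 - antideriv f x)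
      \<le> (y - f y) * f y + ((f y)\<^sup>2 / 2 - antideriv f y)"
    by linarith
  then show "ereal ((x - f x) * f y + ((f x)\<^sup>2 / 2 - antideriv f x))
      \<le> ereal ((y - f y) * f y + ((f y)\<^sup>2 / 2 - antideriv f y))"
    by simp
qed

lemma prox_potential_subgradient: "is_subgradient (prox_potential f) (f y) (y - f y)"
  unfolding is_subgradient_def
proof (intro exI conjI allI)
  define r where "r = (y - f y) * f y + ((f y)\<^sup>2 / 2 - antideriv f y)"
  have affine: "r + (y - f y) * (q - f y) = (y - f y) * q + ((f y)\<^sup>2 / 2 - antideriv f y)" for q
    by (simp add: r_def algebra_simps)
  show "ereal (r + (y - f y) * (q - f y)) \<le> prox_potential f q" for q
    unfolding affine by (rule prox_potential_ge)
  show "prox_potential f (f y) = ereal r"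
    using prox_potential_at_le[of y] prox_potential_ge[of y "f y"] by (simp add: r_def)
qed

lemma prox_real_prox_potential: "prox_real (prox_potential f) = f"
  by (rule ext, rule prox_real_eqI, rule prox_potential_subgradient)

lemma Gamma0_real_prox_potential: "Gamma0_real (prox_potential f)"
proof -
  have "prox_potential f (f 0) \<noteq> \<infinity>"
    using prox_potential_subgradient[of 0] by (auto simp: is_subgradient_def)
  then show ?thesis
    unfolding prox_potential_def[abs_def] by (rule Gamma0_real_SUP_affine)
qed

lemma prox_potential_nonneg: "f 0 = 0 \<Longrightarrow> 0 \<le> prox_potential f p"
  using prox_potential_ge[of 0 p] by (simp add: antideriv_def zero_ereal_def)

lemma prox_potential_zero:
  assumes "f 0 = 0"
  shows "prox_potential f 0 = 0"
proof (rule antisym)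
  show "prox_potential f 0 \<le> 0"
    using prox_potential_at_le[of 0] assms by (simp add: antideriv_def zero_ereal_def)
  show "0 \<le> prox_potential f 0"
    by (rule prox_potential_nonneg[OF assms])
qed

text \<open>The map z \<mapsto> c k (z - f z) + f z / k is continuous and strictly expanding, hence onto;
  at a preimage z of w the point t = f z / k has the subgradient c k (z - f z) = w - t.\<close>
lemma prox_potential_scaled_subgradient_exists:
  assumes c: "0 < c" and k: "0 < k"
  shows "\<exists>t. is_subgradient (\<lambda>y. ereal c * prox_potential f (k * y)) t (w - t)"
proof -
  define g where "g z = c * k * (z - f z) + f z / k" for z
  define m where "m = min (c * k) (1 / k)"
  have expanding: "m * (y - x) \<le> g y - g x" if "x \<le> y" for x y
  proof -
    have "m * ((y - x) - (f y - f x)) \<le> c * k * ((y - x) - (f y - f x))"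
      using diff_le[OF that] by (intro mult_right_mono) (auto simp: m_def)
    moreover have "m * (f y - f x) \<le> (1 / k) * (f y - f x)"
      using le_mono[OF that] by (intro mult_right_mono) (auto simp: m_def)
    ultimately show ?thesis
      by (simp add: g_def algebra_simps)
  qed
  have "continuous_on UNIV g"
    unfolding g_def by (intro continuous_intros continuous) (use k in auto)
  moreover have "0 < m"
    using c k by (simp add: m_def)
  ultimately have "surj g"
    using expanding by (rule continuous_expanding_surj)
  then obtain z where "g z = w"
    by (metis surjD)
  then have "(w - f z / k) / (c * k) = z - f z"
    using c k by (auto simp: g_def field_simps)
  then have "is_subgradient (prox_potential f) (k * (f z / k)) ((w - f z / k) / (c * k))"
    using k prox_potential_subgradient[of z] by simp
  then have "is_subgradient (\<lambda>y. ereal c * prox_potential f (k * y)) (f z / k) (w - f z / k)"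
    unfolding is_subgradient_scaled_iff[OF c k] .
  then show ?thesis ..
qed

lemma prox_real_scaled_fixed_point_iff:
  assumes c: "0 < c" and k: "0 < k"
  shows "prox_real (\<lambda>y. ereal c * prox_potential f (k * y)) (t - c * k * (k * t - w)) = t
    \<longleftrightarrow> k * t = f w"
proof -
  let ?g = "\<lambda>y. ereal c * prox_potential f (k * y)"
  have "- (c * k * (k * t - w)) / (c * k) = w - k * t"
    using c k by (simp add: field_simps)
  then have sub_iff: "is_subgradient ?g t ((t - c * k * (k * t - w)) - t)
      \<longleftrightarrow> is_subgradient (prox_potential f) (k * t) (w - k * t)"
    by (simp add: is_subgradient_scaled_iff[OF c k])
  show ?thesis
  proof
    assume fixed: "prox_real ?g (t - c * k * (k * t - w)) = t"
    obtain t0 where "is_subgradient ?g t0 ((t - c * k * (k * t - w)) - t0)"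
      using prox_potential_scaled_subgradient_exists[OF c k] by blast
    then have "is_subgradient ?g (prox_real ?g (t - c * k * (k * t - w)))
        ((t - c * k * (k * t - w)) - prox_real ?g (t - c * k * (k * t - w)))"
      by (rule is_subgradient_prox_real)
    then have "is_subgradient ?g t ((t - c * k * (k * t - w)) - t)"
      unfolding fixed .
    then have "is_subgradient (prox_potential f) (k * t) (w - k * t)"
      using sub_iff by blast
    then have "prox_real (prox_potential f) w = k * t"
      by (rule prox_real_eqI)
    then show "k * t = f w"
      by (simp add: prox_real_prox_potential)
  next
    assume "k * t = f w"
    then have "is_subgradient (prox_potential f) (k * t) (w - k * t)"
      using prox_potential_subgradient[of w] by simp
    then show "prox_real ?g (t - c * k * (k * t - w)) = t"
      using sub_iff by (simp add: prox_real_eqI)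
  qed
qed

end

section \<open>Square-summable families\<close>

lemma l2_zero_outside: "x \<in> l2 \<Lambda> \<Longrightarrow> i \<notin> \<Lambda> \<Longrightarrow> x i = 0"
  by (simp add: l2_def)

lemma zero_in_l2: "(\<lambda>i. 0) \<in> l2 \<Lambda>"
  by (simp add: l2_def)

lemma l2_if_abs_le:
  assumes x: "x \<in> l2 \<Lambda>" and outside: "\<And>i. i \<notin> \<Lambda> \<Longrightarrow> y i = 0"
    and le: "\<And>i. i \<in> \<Lambda> \<Longrightarrow> \<bar>y i\<bar> \<le> C * \<bar>x i\<bar>"
  shows "y \<in> l2 \<Lambda>"
proof -
  have "(\<lambda>i. C\<^sup>2 * (x i)\<^sup>2) summable_on \<Lambda>"
    using x by (intro summable_on_cmult_right) (simp add: l2_def)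
  moreover have "(y i)\<^sup>2 \<le> C\<^sup>2 * (x i)\<^sup>2" if "i \<in> \<Lambda>" for i
  proof -
    have "\<bar>y i\<bar>\<^sup>2 \<le> (C * \<bar>x i\<bar>)\<^sup>2"
      by (rule power_mono[OF le[OF that]]) simp
    then show ?thesis by (simp add: power_mult_distrib)
  qed
  ultimately have "(\<lambda>i. (y i)\<^sup>2) summable_on \<Lambda>"
    by (rule summable_on_comparison_test) auto
  then show ?thesis
    using outside by (simp add: l2_def)
qed

lemma l2_lincomb:
  assumes x: "x \<in> l2 \<Lambda>" and y: "y \<in> l2 \<Lambda>"
  shows "(\<lambda>i. a * x i + b * y i) \<in> l2 \<Lambda>"
proof -
  have "(\<lambda>i. 2 * a\<^sup>2 * (x i)\<^sup>2 + 2 * b\<^sup>2 * (y i)\<^sup>2) summable_on \<Lambda>"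
    using x y by (intro summable_on_add summable_on_cmult_right) (simp_all add: l2_def)
  moreover have "(a * x i + b * y i)\<^sup>2 \<le> 2 * a\<^sup>2 * (x i)\<^sup>2 + 2 * b\<^sup>2 * (y i)\<^sup>2" for i
  proof -
    have "0 \<le> (a * x i - b * y i)\<^sup>2" by simp
    then show ?thesis by (simp add: power2_eq_square algebra_simps)
  qed
  ultimately have "(\<lambda>i. (a * x i + b * y i)\<^sup>2) summable_on \<Lambda>"
    by (rule summable_on_comparison_test) auto
  then show ?thesis
    using x y by (simp add: l2_def)
qed

lemma l2_diff: "x \<in> l2 \<Lambda> \<Longrightarrow> y \<in> l2 \<Lambda> \<Longrightarrow> (\<lambda>i. x i - y i) \<in> l2 \<Lambda>"
  using l2_lincomb[of x \<Lambda> y 1 "-1"] by simp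

lemma bounded_M_op_in_l2:
  assumes "x \<in> l2 \<Lambda>" and "\<And>i. i \<in> \<Lambda> \<Longrightarrow> \<bar>\<kappa> i\<bar> \<le> C"
  shows "M_op \<Lambda> \<kappa> x \<in> l2 \<Lambda>"
proof (rule l2_if_abs_le[OF assms(1)])
  show "\<bar>M_op \<Lambda> \<kappa> x i\<bar> \<le> C * \<bar>x i\<bar>" if "i \<in> \<Lambda>" for i
    using assms(2)[OF that] that by (simp add: M_op_def abs_mult mult_right_mono)
qed (simp add: M_op_def)

lemma has_sum_l2_norm_sq:
  assumes "x \<in> l2 \<Lambda>"
  shows "((\<lambda>i. (x i)\<^sup>2) has_sum (l2_norm \<Lambda> x)\<^sup>2) \<Lambda>"
  using assms by (simp add: l2_def l2_norm_def infsum_nonneg)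

lemma l2_norm_commute: "l2_norm \<Lambda> (\<lambda>i. x i - y i) = l2_norm \<Lambda> (\<lambda>i. y i - x i)"
  by (simp add: l2_norm_def power2_commute)

lemma l2_norm_eq_0_imp:
  assumes "x \<in> l2 \<Lambda>" and "l2_norm \<Lambda> x = 0"
  shows "x = (\<lambda>i. 0)"
proof
  fix i show "x i = 0"
  proof (cases "i \<in> \<Lambda>")
    case True
    have "(x i)\<^sup>2 = 0"
      using nonneg_has_sum_le_0D[OF has_sum_l2_norm_sq[OF assms(1)] _ _ True] assms(2) by simp
    then show ?thesis by simp
  next
    case False
    then show ?thesis
      using assms(1) by (simp add: l2_zero_outside)
  qed
qed

lemma abs_le_l2_norm:
  assumes "x \<in> l2 \<Lambda>" "i \<in> \<Lambda>"
  shows "\<bar>x i\<bar> \<le> l2_norm \<Lambda> x"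
proof -
  have "((\<lambda>j. (x j)\<^sup>2) has_sum (x i)\<^sup>2) {i}"
    by (simp add: has_sum_finiteI)
  then have "(x i)\<^sup>2 \<le> (l2_norm \<Lambda> x)\<^sup>2"
    using has_sum_mono_neutral[OF _ has_sum_l2_norm_sq[OF assms(1)]] assms(2) by auto
  moreover have "0 \<le> l2_norm \<Lambda> x"
    by (simp add: l2_norm_def infsum_nonneg)
  ultimately show ?thesis
    by (metis abs_le_square_iff abs_of_nonneg)
qed

lemma l2_tendsto_coordinate:
  assumes "x \<in> l2 \<Lambda>" "\<And>n. X n \<in> l2 \<Lambda>" "(\<lambda>n. l2_norm \<Lambda> (\<lambda>i. X n i - x i)) \<longlonglongrightarrow> 0"
    and "i \<in> \<Lambda>"
  shows "(\<lambda>n. X n i) \<longlonglongrightarrow> x i"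
proof -
  have "(\<lambda>n. X n i - x i) \<longlonglongrightarrow> 0"
    by (rule Lim_null_comparison[OF always_eventually assms(3)])
      (use abs_le_l2_norm[OF l2_diff[OF assms(2) assms(1)] assms(4)] in auto)
  then show ?thesis
    by (simp add: LIM_zero_iff)
qed

section \<open>Separable proximal maps on l2\<close>

lemma ereal_sum_le_infsum:
  fixes g :: "'a \<Rightarrow> ereal"
  assumes "\<And>i. i \<in> A \<Longrightarrow> 0 \<le> g i" "finite F" "F \<subseteq> A"
  shows "sum g F \<le> infsum g A"
proof -
  have "sum g F \<le> (SUP F\<in>{F. finite F \<and> F \<subseteq> A}. sum g F)"
    by (rule SUP_upper) (use assms in auto)
  also have "\<dots> = infsum g A"
    by (rule nonneg_infsum_complete[symmetric]) (use assms in auto)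
  finally show ?thesis .
qed

lemma ereal_infsum_cmult:
  fixes g :: "'a \<Rightarrow> ereal"
  assumes "\<And>i. i \<in> A \<Longrightarrow> 0 \<le> g i" "0 \<le> c"
  shows "c * infsum g A = infsum (\<lambda>i. c * g i) A"
proof -
  have "c * infsum g A = c * (SUP F\<in>{F. finite F \<and> F \<subseteq> A}. sum g F)"
    by (simp add: nonneg_infsum_complete assms(1))
  also have "\<dots> = (SUP F\<in>{F. finite F \<and> F \<subseteq> A}. c * sum g F)"
    by (rule SUP_ereal_mult_left[symmetric]) (use assms in \<open>auto intro!: sum_nonneg\<close>)
  also have "\<dots> = (SUP F\<in>{F. finite F \<and> F \<subseteq> A}. sum (\<lambda>i. c * g i) F)"
    by (rule SUP_cong) (use assms in \<open>auto intro!: sum_ereal_right_distrib\<close>)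
  also have "\<dots> = infsum (\<lambda>i. c * g i) A"
    by (rule nonneg_infsum_complete[symmetric]) (use assms in auto)
  finally show ?thesis .
qed

text \<open>The extended reals are not a topological monoid (\<infinity> + -\<infinity>), so has_sum_add is not available
  and the comparison is made on finite partial sums.\<close>
lemma ereal_add_infsum_mono:
  fixes G H :: "'i \<Rightarrow> ereal"
  assumes a: "(a has_sum A) \<Lambda>" and b: "(b has_sum B) \<Lambda>"
    and G: "\<And>i. i \<in> \<Lambda> \<Longrightarrow> 0 \<le> G i" and H: "\<And>i. i \<in> \<Lambda> \<Longrightarrow> 0 \<le> H i"
    and le: "\<And>i. i \<in> \<Lambda> \<Longrightarrow> ereal (a i) + G i \<le> ereal (b i) + H i"
  shows "ereal A + infsum G \<Lambda> \<le> ereal B + infsum H \<Lambda>"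
proof (cases "infsum H \<Lambda> = \<infinity>")
  case False
  moreover have "0 \<le> infsum H \<Lambda>"
    using H by (rule infsum_nonneg)
  ultimately obtain V where V: "infsum H \<Lambda> = ereal V"
    by (cases "infsum H \<Lambda>") auto
  have le': "G i \<le> ereal (b i - a i) + H i" if "i \<in> \<Lambda>" for i
    using le[OF that] G[OF that] by (cases "G i"; cases "H i") auto
  have "((\<lambda>i. b i - a i) has_sum (B - A)) \<Lambda>"
    using has_sum_add[OF b has_sum_uminusI[OF a]] by simp
  then have lim: "((\<lambda>Y. ereal (sum (\<lambda>i. b i - a i) Y + V)) \<longlongrightarrow> ereal (B - A + V)) (finite_subsets_at_top \<Lambda>)"
    unfolding has_sum_def by (intro tendsto_intros)
  have "sum G F \<le> ereal (B - A + V)" if F: "finite F" "F \<subseteq> \<Lambda>" for F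
  proof (rule tendsto_lowerbound[OF lim])
    show "\<forall>\<^sub>F Y in finite_subsets_at_top \<Lambda>. sum G F \<le> ereal (sum (\<lambda>i. b i - a i) Y + V)"
      unfolding eventually_finite_subsets_at_top
    proof (intro exI[of _ F] conjI allI impI)
      fix Y assume Y: "finite Y \<and> F \<subseteq> Y \<and> Y \<subseteq> \<Lambda>"
      have "sum G F \<le> sum G Y"
        by (rule sum_mono2) (use Y G in auto)
      also have "\<dots> \<le> sum (\<lambda>i. ereal (b i - a i) + H i) Y"
        by (rule sum_mono) (use Y le' in auto)
      also have "\<dots> = ereal (sum (\<lambda>i. b i - a i) Y) + sum H Y"
        by (simp add: sum.distrib)
      also have "\<dots> \<le> ereal (sum (\<lambda>i. b i - a i) Y) + infsum H \<Lambda>"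
        by (intro add_left_mono ereal_sum_le_infsum) (use Y H in auto)
      finally show "sum G F \<le> ereal (sum (\<lambda>i. b i - a i) Y + V)"
        by (simp add: V)
    qed (use F in auto)
  qed (simp add: finite_subsets_at_top_neq_bot)
  then have "(SUP F\<in>{F. finite F \<and> F \<subseteq> \<Lambda>}. sum G F) \<le> ereal (B - A + V)"
    by (intro SUP_least) auto
  then have "infsum G \<Lambda> \<le> ereal (B - A + V)"
    by (simp add: nonneg_infsum_complete G)
  then have "ereal A + infsum G \<Lambda> \<le> ereal A + ereal (B - A + V)"
    by (rule add_left_mono)
  then show ?thesis
    by (simp add: V)
qed simp

definition prox_objective :: "'i set \<Rightarrow> (('i \<Rightarrow> real) \<Rightarrow> ereal) \<Rightarrow> ('i \<Rightarrow> real) \<Rightarrow> ('i \<Rightarrow> real) \<Rightarrow> ereal" where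
  "prox_objective \<Lambda> f x y = ereal ((l2_norm \<Lambda> (\<lambda>i. x i - y i))\<^sup>2 / 2) + f y"

lemma prox_l2_eqI:
  assumes "p \<in> l2 \<Lambda>" and "\<And>y. y \<in> l2 \<Lambda> \<Longrightarrow> prox_objective \<Lambda> f x p \<le> prox_objective \<Lambda> f x y"
    and "\<And>q. q \<in> l2 \<Lambda> \<Longrightarrow> (\<And>y. y \<in> l2 \<Lambda> \<Longrightarrow> prox_objective \<Lambda> f x q \<le> prox_objective \<Lambda> f x y) \<Longrightarrow> q = p"
  shows "prox_l2 \<Lambda> f x = p"
  unfolding prox_l2_def
proof (rule the_equality)
  show "p \<in> l2 \<Lambda> \<and> (\<forall>y\<in>l2 \<Lambda>. ereal ((l2_norm \<Lambda> (\<lambda>i. x i - p i))\<^sup>2 / 2) + f p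
      \<le> ereal ((l2_norm \<Lambda> (\<lambda>i. x i - y i))\<^sup>2 / 2) + f y)"
    using assms(1,2) by (simp add: prox_objective_def)
next
  fix q assume "q \<in> l2 \<Lambda> \<and> (\<forall>y\<in>l2 \<Lambda>. ereal ((l2_norm \<Lambda> (\<lambda>i. x i - q i))\<^sup>2 / 2) + f q
      \<le> ereal ((l2_norm \<Lambda> (\<lambda>i. x i - y i))\<^sup>2 / 2) + f y)"
  then show "q = p"
    by (intro assms(3)) (simp_all add: prox_objective_def)
qed

lemma separable_prox_point_in_l2:
  assumes x: "x \<in> l2 \<Lambda>" and nonneg: "\<And>i t. i \<in> \<Lambda> \<Longrightarrow> 0 \<le> g i t"
    and zero: "\<And>i. i \<in> \<Lambda> \<Longrightarrow> g i 0 = 0"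
    and sub: "\<And>i. i \<in> \<Lambda> \<Longrightarrow> is_subgradient (g i) (p i) (x i - p i)"
    and outside: "\<And>i. i \<notin> \<Lambda> \<Longrightarrow> p i = 0"
  shows "p \<in> l2 \<Lambda>"
proof (rule l2_if_abs_le[OF x outside, where C=1])
  fix i assume i: "i \<in> \<Lambda>"
  show "\<bar>p i\<bar> \<le> 1 * \<bar>x i\<bar>"
    using prox_real_abs_le[OF sub[OF i] zero[OF i] nonneg[OF i]] by simp
qed

lemma separable_prox_strong_ineq:
  fixes g :: "'i \<Rightarrow> real \<Rightarrow> ereal"
  assumes x: "x \<in> l2 \<Lambda>" and p: "p \<in> l2 \<Lambda>" and y: "y \<in> l2 \<Lambda>"
    and nonneg: "\<And>i t. i \<in> \<Lambda> \<Longrightarrow> 0 \<le> g i t"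
    and sub: "\<And>i. i \<in> \<Lambda> \<Longrightarrow> is_subgradient (g i) (p i) (x i - p i)"
  shows "ereal ((l2_norm \<Lambda> (\<lambda>i. x i - p i))\<^sup>2 / 2 + (l2_norm \<Lambda> (\<lambda>i. y i - p i))\<^sup>2 / 2)
      + (\<Sum>\<^sub>\<infinity>i\<in>\<Lambda>. g i (p i)) \<le> prox_objective \<Lambda> (\<lambda>y. \<Sum>\<^sub>\<infinity>i\<in>\<Lambda>. g i (y i)) x y"
proof -
  have norm_sq: "((\<lambda>i. (u i - v i)\<^sup>2 / 2) has_sum (l2_norm \<Lambda> (\<lambda>i. u i - v i))\<^sup>2 / 2) \<Lambda>"
    if "u \<in> l2 \<Lambda>" "v \<in> l2 \<Lambda>" for u v
    using has_sum_cmult_right[OF has_sum_l2_norm_sq[OF l2_diff[OF that]], of "1 / 2"] by simp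
  show ?thesis
    unfolding prox_objective_def
  proof (rule ereal_add_infsum_mono[OF has_sum_add[OF norm_sq norm_sq] norm_sq])
    fix i assume i: "i \<in> \<Lambda>"
    show "ereal ((x i - p i)\<^sup>2 / 2 + (y i - p i)\<^sup>2 / 2) + g i (p i)
        \<le> ereal ((x i - y i)\<^sup>2 / 2) + g i (y i)"
      using is_subgradient_strong_min[OF sub[OF i], of "y i"] by (simp add: ac_simps)
  qed (use x p y nonneg in auto)
qed

text \<open>Uniqueness: for a second minimiser q the strong inequality at y = q forces |q - p| = 0.\<close>
lemma l2_separable_prox_min:
  fixes \<Lambda> :: "'i set" and g :: "'i \<Rightarrow> real \<Rightarrow> ereal"
  defines "G \<equiv> \<lambda>y. \<Sum>\<^sub>\<infinity>i\<in>\<Lambda>. g i (y i)"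
  assumes x: "x \<in> l2 \<Lambda>" and nonneg: "\<And>i t. i \<in> \<Lambda> \<Longrightarrow> 0 \<le> g i t"
    and zero: "\<And>i. i \<in> \<Lambda> \<Longrightarrow> g i 0 = 0"
    and sub: "\<And>i. i \<in> \<Lambda> \<Longrightarrow> is_subgradient (g i) (p i) (x i - p i)"
    and outside: "\<And>i. i \<notin> \<Lambda> \<Longrightarrow> p i = 0"
  shows "p \<in> l2 \<Lambda>"
    and "y \<in> l2 \<Lambda> \<Longrightarrow> prox_objective \<Lambda> G x p \<le> prox_objective \<Lambda> G x y"
    and "q \<in> l2 \<Lambda> \<Longrightarrow> (\<And>y. y \<in> l2 \<Lambda> \<Longrightarrow> prox_objective \<Lambda> G x q \<le> prox_objective \<Lambda> G x y) \<Longrightarrow> q = p"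
proof -
  show p: "p \<in> l2 \<Lambda>"
    using x nonneg zero sub outside by (rule separable_prox_point_in_l2)
  have strong: "ereal ((l2_norm \<Lambda> (\<lambda>i. x i - p i))\<^sup>2 / 2 + (l2_norm \<Lambda> (\<lambda>i. y i - p i))\<^sup>2 / 2) + G p
      \<le> prox_objective \<Lambda> G x y" if "y \<in> l2 \<Lambda>" for y
    unfolding G_def by (rule separable_prox_strong_ineq[OF x p that nonneg sub])
  show min: "prox_objective \<Lambda> G x p \<le> prox_objective \<Lambda> G x y" if "y \<in> l2 \<Lambda>" for y
  proof -
    have "prox_objective \<Lambda> G x p
        \<le> ereal ((l2_norm \<Lambda> (\<lambda>i. x i - p i))\<^sup>2 / 2 + (l2_norm \<Lambda> (\<lambda>i. y i - p i))\<^sup>2 / 2) + G p"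
      unfolding prox_objective_def by (intro add_right_mono) simp
    also have "\<dots> \<le> prox_objective \<Lambda> G x y"
      by (rule strong[OF that])
    finally show ?thesis .
  qed
  assume q: "q \<in> l2 \<Lambda>" and q_min: "\<And>y. y \<in> l2 \<Lambda> \<Longrightarrow> prox_objective \<Lambda> G x q \<le> prox_objective \<Lambda> G x y"
  have "G p \<le> prox_objective \<Lambda> G x p"
    unfolding prox_objective_def by (rule ereal_le_add_self2) simp
  also have "\<dots> \<le> prox_objective \<Lambda> G x (\<lambda>i. 0)"
    by (rule min[OF zero_in_l2])
  also have "\<dots> < \<infinity>"
    using infsum_0[of \<Lambda> "\<lambda>i. g i 0"] zero by (simp add: prox_objective_def G_def)
  finally have "G p \<noteq> \<infinity>"
    by simp
  moreover have "0 \<le> G p"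
    unfolding G_def by (rule infsum_nonneg) (use nonneg in auto)
  ultimately obtain r where r: "G p = ereal r"
    by (cases "G p") auto
  have "ereal ((l2_norm \<Lambda> (\<lambda>i. x i - p i))\<^sup>2 / 2 + (l2_norm \<Lambda> (\<lambda>i. q i - p i))\<^sup>2 / 2) + G p
      \<le> prox_objective \<Lambda> G x p"
    using strong[OF q] q_min[OF p] by (rule order_trans)
  then have "l2_norm \<Lambda> (\<lambda>i. q i - p i) = 0"
    using r by (simp add: prox_objective_def)
  then have "(\<lambda>i. q i - p i) = (\<lambda>i. 0)"
    by (rule l2_norm_eq_0_imp[OF l2_diff[OF q p]])
  then show "q = p"
    by (simp add: fun_eq_iff)
qed

lemma prox_l2_separable:
  fixes g :: "'i \<Rightarrow> real \<Rightarrow> ereal"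
  assumes x: "x \<in> l2 \<Lambda>" and nonneg: "\<And>i t. i \<in> \<Lambda> \<Longrightarrow> 0 \<le> g i t"
    and zero: "\<And>i. i \<in> \<Lambda> \<Longrightarrow> g i 0 = 0"
    and sub: "\<And>i. i \<in> \<Lambda> \<Longrightarrow> \<exists>t. is_subgradient (g i) t (x i - t)"
  shows "prox_l2 \<Lambda> (\<lambda>y. \<Sum>\<^sub>\<infinity>i\<in>\<Lambda>. g i (y i)) x = (\<lambda>i. if i \<in> \<Lambda> then prox_real (g i) (x i) else 0)"
proof -
  let ?p = "\<lambda>i. if i \<in> \<Lambda> then prox_real (g i) (x i) else 0"
  have "is_subgradient (g i) (?p i) (x i - ?p i)" if "i \<in> \<Lambda>" for i
    using sub[OF that] is_subgradient_prox_real that by auto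
  note min = l2_separable_prox_min[OF x nonneg zero this]
  show ?thesis
    by (rule prox_l2_eqI[OF min(1) min(2) min(3)]) simp_all
qed

section \<open>The separable regulariser\<close>

lemma Reg_eq_SUP:
  assumes "\<And>i t. i \<in> \<Lambda> \<Longrightarrow> 0 \<le> s i t"
  shows "Reg \<Lambda> \<kappa> s x = (SUP F\<in>{F. finite F \<and> F \<subseteq> \<Lambda>}. \<Sum>i\<in>F. s i (\<kappa> i * x i))"
  unfolding Reg_def by (rule nonneg_infsum_complete) (use assms in auto)

lemma Reg_nonneg:
  assumes "\<And>i t. i \<in> \<Lambda> \<Longrightarrow> 0 \<le> s i t"
  shows "0 \<le> Reg \<Lambda> \<kappa> s x"
  unfolding Reg_def by (rule infsum_nonneg) (use assms in auto)

lemma Reg_convex: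
  assumes nonneg: "\<And>i t. i \<in> \<Lambda> \<Longrightarrow> 0 \<le> s i t"
    and convex: "\<And>i. i \<in> \<Lambda> \<Longrightarrow> Gamma0_real (s i)"
    and t: "0 < t" "t < 1"
  shows "Reg \<Lambda> \<kappa> s (\<lambda>i. (1 - t) * x i + t * y i) \<le> ereal (1 - t) * Reg \<Lambda> \<kappa> s x + ereal t * Reg \<Lambda> \<kappa> s y"
proof -
  have SUP: "Reg \<Lambda> \<kappa> s z = (SUP F\<in>{F. finite F \<and> F \<subseteq> \<Lambda>}. \<Sum>i\<in>F. s i (\<kappa> i * z i))" for z
    by (rule Reg_eq_SUP) (rule nonneg)
  show ?thesis
    unfolding SUP
  proof (rule SUP_least)
  fix F assume F: "F \<in> {F. finite F \<and> F \<subseteq> \<Lambda>}"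
  have "(\<Sum>i\<in>F. s i (\<kappa> i * ((1 - t) * x i + t * y i)))
      \<le> (\<Sum>i\<in>F. ereal (1 - t) * s i (\<kappa> i * x i) + ereal t * s i (\<kappa> i * y i))"
  proof (rule sum_mono)
    fix i assume "i \<in> F"
    then have "i \<in> \<Lambda>" using F by auto
    moreover have "\<kappa> i * ((1 - t) * x i + t * y i) = (1 - t) * (\<kappa> i * x i) + t * (\<kappa> i * y i)"
      by (simp add: algebra_simps)
    ultimately show "s i (\<kappa> i * ((1 - t) * x i + t * y i))
        \<le> ereal (1 - t) * s i (\<kappa> i * x i) + ereal t * s i (\<kappa> i * y i)"
      using convex t unfolding Gamma0_real_def by auto
  qed
  also have "\<dots> = ereal (1 - t) * (\<Sum>i\<in>F. s i (\<kappa> i * x i)) + ereal t * (\<Sum>i\<in>F. s i (\<kappa> i * y i))"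
  proof -
    have "0 \<le> s i (\<kappa> i * z i)" if "i \<in> F" for i z
      using F nonneg that by auto
    then show ?thesis
      by (simp add: sum.distrib sum_ereal_right_distrib)
  qed
  also have "\<dots> \<le> ereal (1 - t) * (SUP F\<in>{F. finite F \<and> F \<subseteq> \<Lambda>}. \<Sum>i\<in>F. s i (\<kappa> i * x i))
      + ereal t * (SUP F\<in>{F. finite F \<and> F \<subseteq> \<Lambda>}. \<Sum>i\<in>F. s i (\<kappa> i * y i))"
    by (intro add_mono ereal_mult_left_mono SUP_upper) (use F t in auto)
  finally show "(\<Sum>i\<in>F. s i (\<kappa> i * ((1 - t) * x i + t * y i)))
      \<le> ereal (1 - t) * (SUP F\<in>{F. finite F \<and> F \<subseteq> \<Lambda>}. \<Sum>i\<in>F. s i (\<kappa> i * x i))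
      + ereal t * (SUP F\<in>{F. finite F \<and> F \<subseteq> \<Lambda>}. \<Sum>i\<in>F. s i (\<kappa> i * y i))" .
  qed
qed

lemma sum_liminf_le_liminf_sum:
  fixes u :: "'a \<Rightarrow> nat \<Rightarrow> ereal"
  assumes "\<And>i n. i \<in> F \<Longrightarrow> 0 \<le> u i n"
  shows "(\<Sum>i\<in>F. liminf (u i)) \<le> liminf (\<lambda>n. \<Sum>i\<in>F. u i n)"
  using assms
proof (induction F rule: infinite_finite_induct)
  case (insert a F)
  have "(\<Sum>i\<in>insert a F. liminf (u i)) = liminf (u a) + (\<Sum>i\<in>F. liminf (u i))"
    using insert.hyps by simp
  also have "\<dots> \<le> liminf (u a) + liminf (\<lambda>n. \<Sum>i\<in>F. u i n)"
    using insert.prems by (intro add_left_mono insert.IH) auto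
  also have "\<dots> \<le> liminf (\<lambda>n. u a n + (\<Sum>i\<in>F. u i n))"
    using insert.prems by (intro Liminf_add_le always_eventually allI sum_nonneg) auto
  also have "\<dots> = liminf (\<lambda>n. \<Sum>i\<in>insert a F. u i n)"
    using insert.hyps by simp
  finally show ?case .
qed (simp_all add: Liminf_const)

lemma Reg_lsc:
  assumes nonneg: "\<And>i t. i \<in> \<Lambda> \<Longrightarrow> 0 \<le> s i t"
    and lsc: "\<And>i. i \<in> \<Lambda> \<Longrightarrow> Gamma0_real (s i)"
    and x: "x \<in> l2 \<Lambda>" and X: "\<And>n. X n \<in> l2 \<Lambda>"
    and lim: "(\<lambda>n. l2_norm \<Lambda> (\<lambda>i. X n i - x i)) \<longlonglongrightarrow> 0"
  shows "Reg \<Lambda> \<kappa> s x \<le> liminf (\<lambda>n. Reg \<Lambda> \<kappa> s (X n))"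
proof -
  have SUP: "Reg \<Lambda> \<kappa> s x = (SUP F\<in>{F. finite F \<and> F \<subseteq> \<Lambda>}. \<Sum>i\<in>F. s i (\<kappa> i * x i))"
    by (rule Reg_eq_SUP) (rule nonneg)
  show ?thesis
    unfolding SUP
  proof (rule SUP_least)
  fix F assume F: "F \<in> {F. finite F \<and> F \<subseteq> \<Lambda>}"
  have "s i (\<kappa> i * x i) \<le> liminf (\<lambda>n. s i (\<kappa> i * X n i))" if "i \<in> \<Lambda>" for i
    using lsc[OF that] l2_tendsto_coordinate[OF x X lim that] unfolding Gamma0_real_def
    by (blast intro: tendsto_mult_left)
  then have "(\<Sum>i\<in>F. s i (\<kappa> i * x i)) \<le> (\<Sum>i\<in>F. liminf (\<lambda>n. s i (\<kappa> i * X n i)))"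
    using F by (intro sum_mono) auto
  also have "\<dots> \<le> liminf (\<lambda>n. \<Sum>i\<in>F. s i (\<kappa> i * X n i))"
    using F nonneg by (intro sum_liminf_le_liminf_sum) auto
  also have "\<dots> \<le> liminf (\<lambda>n. Reg \<Lambda> \<kappa> s (X n))"
    unfolding Reg_def using F nonneg by (intro Liminf_mono always_eventually allI ereal_sum_le_infsum) auto
  finally show "(\<Sum>i\<in>F. s i (\<kappa> i * x i)) \<le> liminf (\<lambda>n. Reg \<Lambda> \<kappa> s (X n))" .
  qed
qed

lemma Gamma0_l2_Reg:
  assumes nonneg: "\<And>i t. i \<in> \<Lambda> \<Longrightarrow> 0 \<le> s i t"
    and Gamma0: "\<And>i. i \<in> \<Lambda> \<Longrightarrow> Gamma0_real (s i)"
    and zero: "\<And>i. i \<in> \<Lambda> \<Longrightarrow> s i 0 = 0"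
  shows "Gamma0_l2 \<Lambda> (Reg \<Lambda> \<kappa> s)"
  unfolding Gamma0_l2_def
proof (intro conjI ballI allI impI)
  show "Reg \<Lambda> \<kappa> s x \<noteq> - \<infinity>" for x
    using Reg_nonneg[of \<Lambda> s \<kappa> x] nonneg by auto
  have "Reg \<Lambda> \<kappa> s (\<lambda>i. 0) = 0"
    unfolding Reg_def by (rule infsum_0) (simp add: zero)
  then show "\<exists>x\<in>l2 \<Lambda>. Reg \<Lambda> \<kappa> s x \<noteq> \<infinity>"
    using zero_in_l2 by force
next
  fix x y and t :: real assume "0 < t \<and> t < 1"
  then show "Reg \<Lambda> \<kappa> s (\<lambda>i. (1 - t) * x i + t * y i) \<le> ereal (1 - t) * Reg \<Lambda> \<kappa> s x + ereal t * Reg \<Lambda> \<kappa> s y"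
    using nonneg Gamma0 by (intro Reg_convex) auto
next
  fix x X assume "x \<in> l2 \<Lambda>" "(\<forall>n. X n \<in> l2 \<Lambda>) \<and> (\<lambda>n. l2_norm \<Lambda> (\<lambda>i. X n i - x i)) \<longlonglongrightarrow> 0"
  then show "Reg \<Lambda> \<kappa> s x \<le> liminf (\<lambda>n. Reg \<Lambda> \<kappa> s (X n))"
    using nonneg Gamma0 by (intro Reg_lsc) auto
qed

section \<open>Minimisation and forward-backward fixed points\<close>

locale mono_nonexpansive_family =
  fixes \<Lambda> :: "'i set" and \<kappa> :: "'i \<Rightarrow> real" and f :: "'i \<Rightarrow> real \<Rightarrow> real"
  assumes kappa_pos: "\<And>i. i \<in> \<Lambda> \<Longrightarrow> 0 < \<kappa> i"
    and kappa_bounded: "bdd_above (\<kappa> ` \<Lambda>)"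
    and mono_nonexpansive: "\<And>i. i \<in> \<Lambda> \<Longrightarrow> mono_nonexpansive (f i)"
    and f_zero: "\<And>i. i \<in> \<Lambda> \<Longrightarrow> f i 0 = 0"
begin

abbreviation pot :: "'i \<Rightarrow> real \<Rightarrow> ereal" where
  "pot i \<equiv> prox_potential (f i)"

definition objective :: "('i \<Rightarrow> real) \<Rightarrow> ('i \<Rightarrow> real) \<Rightarrow> ereal" where
  "objective z x = ereal ((l2_norm \<Lambda> (\<lambda>i. M_op \<Lambda> \<kappa> x i - z i))\<^sup>2 / 2) + Reg \<Lambda> \<kappa> pot x"

definition forward_backward :: "real \<Rightarrow> ('i \<Rightarrow> real) \<Rightarrow> ('i \<Rightarrow> real) \<Rightarrow> ('i \<Rightarrow> real)" where
  "forward_backward \<gamma> z x = prox_l2 \<Lambda> (\<lambda>y. ereal \<gamma> * Reg \<Lambda> \<kappa> pot y)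
     (\<lambda>i. x i - \<gamma> * M_op \<Lambda> \<kappa> (\<lambda>j. M_op \<Lambda> \<kappa> x j - z j) i)"

definition solution :: "('i \<Rightarrow> real) \<Rightarrow> ('i \<Rightarrow> real)" where
  "solution z = M_pinv \<Lambda> \<kappa> (\<lambda>i. if i \<in> \<Lambda> then f i (z i) else 0)"

lemma pot_nonneg: "i \<in> \<Lambda> \<Longrightarrow> 0 \<le> pot i t"
  by (rule mono_nonexpansive.prox_potential_nonneg[OF mono_nonexpansive f_zero])

lemma pot_zero: "i \<in> \<Lambda> \<Longrightarrow> pot i 0 = 0"
  by (rule mono_nonexpansive.prox_potential_zero[OF mono_nonexpansive f_zero])

lemma Gamma0_real_pot: "i \<in> \<Lambda> \<Longrightarrow> Gamma0_real (pot i)"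
  by (rule mono_nonexpansive.Gamma0_real_prox_potential[OF mono_nonexpansive])

lemma prox_real_pot: "i \<in> \<Lambda> \<Longrightarrow> prox_real (pot i) = f i"
  by (rule mono_nonexpansive.prox_real_prox_potential[OF mono_nonexpansive])

lemma M_op_in_l2:
  assumes "x \<in> l2 \<Lambda>"
  shows "M_op \<Lambda> \<kappa> x \<in> l2 \<Lambda>"
proof -
  obtain C where "\<And>i. i \<in> \<Lambda> \<Longrightarrow> \<kappa> i \<le> C"
    using kappa_bounded by (auto simp: bdd_above_def)
  then have "\<And>i. i \<in> \<Lambda> \<Longrightarrow> \<bar>\<kappa> i\<bar> \<le> C"
    using kappa_pos by fastforce
  then show ?thesis
    by (rule bounded_M_op_in_l2[OF assms])
qed

lemma M_op_solution: "M_op \<Lambda> \<kappa> (solution z) = (\<lambda>i. if i \<in> \<Lambda> then f i (z i) else 0)"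
  using kappa_pos by (auto simp: M_op_def M_pinv_def solution_def fun_eq_iff less_imp_neq[symmetric])

lemma Gamma0_l2_Reg_pot: "Gamma0_l2 \<Lambda> (Reg \<Lambda> \<kappa> pot)"
  by (rule Gamma0_l2_Reg)
    (simp_all add: pot_nonneg pot_zero Gamma0_real_pot)

lemma prox_l2_Reg:
  assumes "z \<in> l2 \<Lambda>"
  shows "prox_l2 \<Lambda> (Reg \<Lambda> \<kappa> pot) z = (\<lambda>i. if i \<in> \<Lambda> then prox_real (\<lambda>t. pot i (\<kappa> i * t)) (z i) else 0)"
  unfolding Reg_def
proof (rule prox_l2_separable[where g="\<lambda>i t. pot i (\<kappa> i * t)", OF assms])
  fix i assume i: "i \<in> \<Lambda>"
  show "\<exists>t. is_subgradient (\<lambda>t. pot i (\<kappa> i * t)) t (z i - t)"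
    using mono_nonexpansive.prox_potential_scaled_subgradient_exists[OF mono_nonexpansive[OF i]
        zero_less_one kappa_pos[OF i]]
    by (simp add: one_ereal_def[symmetric])
qed (simp_all add: pot_nonneg pot_zero)

lemma objective_eq_prox_objective:
  "objective z x = prox_objective \<Lambda> (\<lambda>u. \<Sum>\<^sub>\<infinity>i\<in>\<Lambda>. pot i (u i)) z (M_op \<Lambda> \<kappa> x)"
proof -
  have "(\<Sum>\<^sub>\<infinity>i\<in>\<Lambda>. pot i (M_op \<Lambda> \<kappa> x i)) = Reg \<Lambda> \<kappa> pot x"
    unfolding Reg_def M_op_def by (rule infsum_cong) simp
  then show ?thesis
    by (simp add: objective_def prox_objective_def l2_norm_commute)
qed

lemma
  assumes z: "z \<in> l2 \<Lambda>"
  shows objective_solution_le: "x \<in> l2 \<Lambda> \<Longrightarrow> objective z (solution z) \<le> objective z x"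
    and objective_argmin_unique: "solution z \<in> l2 \<Lambda> \<Longrightarrow> x \<in> l2 \<Lambda> \<Longrightarrow>
      (\<And>y. y \<in> l2 \<Lambda> \<Longrightarrow> objective z x \<le> objective z y) \<Longrightarrow> x = solution z"
proof -
  let ?H = "prox_objective \<Lambda> (\<lambda>u. \<Sum>\<^sub>\<infinity>i\<in>\<Lambda>. pot i (u i)) z"
  have sub: "is_subgradient (pot i) (M_op \<Lambda> \<kappa> (solution z) i) (z i - M_op \<Lambda> \<kappa> (solution z) i)"
    if "i \<in> \<Lambda>" for i
    using mono_nonexpansive.prox_potential_subgradient[OF mono_nonexpansive[OF that]] that
    by (simp add: M_op_solution)
  have outside: "M_op \<Lambda> \<kappa> (solution z) i = 0" if "i \<notin> \<Lambda>" for i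
    using that by (simp add: M_op_def)
  note min = l2_separable_prox_min[where g=pot and p="M_op \<Lambda> \<kappa> (solution z)" and x=z]
  have min_sol: "objective z (solution z) \<le> ?H u" if "u \<in> l2 \<Lambda>" for u
    unfolding objective_eq_prox_objective
    by (rule min(2)) (use z sub outside pot_nonneg pot_zero that in auto)
  show "objective z (solution z) \<le> objective z x" if "x \<in> l2 \<Lambda>"
    unfolding objective_eq_prox_objective[of z x] by (rule min_sol[OF M_op_in_l2[OF that]])
  assume sol: "solution z \<in> l2 \<Lambda>" and x: "x \<in> l2 \<Lambda>"
    and x_min: "\<And>y. y \<in> l2 \<Lambda> \<Longrightarrow> objective z x \<le> objective z y"
  \<comment> \<open>M_op need not be onto l2; minimality of M_op x over all of l2 goes through the solution\<close>
  have "M_op \<Lambda> \<kappa> x = M_op \<Lambda> \<kappa> (solution z)"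
  proof (rule min(3))
    show "?H (M_op \<Lambda> \<kappa> x) \<le> ?H u" if "u \<in> l2 \<Lambda>" for u
      using x_min[OF sol] min_sol[OF that] by (simp add: objective_eq_prox_objective)
  qed (use z sub outside pot_nonneg pot_zero M_op_in_l2[OF x] in auto)
  then show "x = solution z"
    using kappa_pos l2_zero_outside[OF x] l2_zero_outside[OF sol]
    by (fastforce simp: M_op_def fun_eq_iff split: if_splits)
qed

lemma forward_backward_eq:
  assumes z: "z \<in> l2 \<Lambda>" and x: "x \<in> l2 \<Lambda>" and \<gamma>: "0 < \<gamma>"
  shows "forward_backward \<gamma> z x = (\<lambda>i. if i \<in> \<Lambda>
    then prox_real (\<lambda>t. ereal \<gamma> * pot i (\<kappa> i * t)) (x i - \<gamma> * \<kappa> i * (\<kappa> i * x i - z i)) else 0)"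
proof -
  have scaled: "(\<lambda>y. ereal \<gamma> * Reg \<Lambda> \<kappa> pot y) = (\<lambda>y. \<Sum>\<^sub>\<infinity>i\<in>\<Lambda>. ereal \<gamma> * pot i (\<kappa> i * y i))"
    unfolding Reg_def using \<gamma> pot_nonneg by (intro ext ereal_infsum_cmult) auto
  have step: "(\<lambda>i. x i - \<gamma> * M_op \<Lambda> \<kappa> (\<lambda>j. M_op \<Lambda> \<kappa> x j - z j) i) \<in> l2 \<Lambda>"
    using l2_lincomb[OF x M_op_in_l2[OF l2_diff[OF M_op_in_l2[OF x] z]], of 1 "- \<gamma>"] by simp
  have "forward_backward \<gamma> z x = (\<lambda>i. if i \<in> \<Lambda> then prox_real (\<lambda>t. ereal \<gamma> * pot i (\<kappa> i * t))
      (x i - \<gamma> * M_op \<Lambda> \<kappa> (\<lambda>j. M_op \<Lambda> \<kappa> x j - z j) i) else 0)"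
    unfolding forward_backward_def scaled
  proof (rule prox_l2_separable[OF step])
    fix i assume i: "i \<in> \<Lambda>"
    show "\<exists>t. is_subgradient (\<lambda>t. ereal \<gamma> * pot i (\<kappa> i * t)) t
        (x i - \<gamma> * M_op \<Lambda> \<kappa> (\<lambda>j. M_op \<Lambda> \<kappa> x j - z j) i - t)"
      by (rule mono_nonexpansive.prox_potential_scaled_subgradient_exists[OF mono_nonexpansive[OF i] \<gamma> kappa_pos[OF i]])
  qed (use \<gamma> pot_nonneg pot_zero in auto)
  then show ?thesis
    by (simp add: M_op_def fun_eq_iff mult.assoc)
qed

lemma forward_backward_fixed_point_iff:
  assumes z: "z \<in> l2 \<Lambda>" and x: "x \<in> l2 \<Lambda>" and \<gamma>: "0 < \<gamma>"
  shows "forward_backward \<gamma> z x = x \<longleftrightarrow> x = solution z"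
proof -
  have "prox_real (\<lambda>t. ereal \<gamma> * pot i (\<kappa> i * t)) (x i - \<gamma> * \<kappa> i * (\<kappa> i * x i - z i)) = x i
      \<longleftrightarrow> x i = solution z i" if i: "i \<in> \<Lambda>" for i
  proof -
    have "prox_real (\<lambda>t. ereal \<gamma> * pot i (\<kappa> i * t)) (x i - \<gamma> * \<kappa> i * (\<kappa> i * x i - z i)) = x i
        \<longleftrightarrow> \<kappa> i * x i = f i (z i)"
      by (rule mono_nonexpansive.prox_real_scaled_fixed_point_iff[OF mono_nonexpansive[OF i] \<gamma> kappa_pos[OF i]])
    also have "\<dots> \<longleftrightarrow> x i = solution z i"
      using kappa_pos[OF i] i by (auto simp: solution_def M_pinv_def field_simps)
    finally show ?thesis .
  qed
  then show ?thesis
    using l2_zero_outside[OF x] unfolding forward_backward_eq[OF z x \<gamma>]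
    by (auto simp: fun_eq_iff solution_def M_pinv_def)
qed

end

theorem lemma3p3:
  fixes \<Lambda> :: "'i set" and \<kappa> :: "'i \<Rightarrow> real"
    and \<phi> :: "real \<Rightarrow> real \<Rightarrow> real \<Rightarrow> real"
  assumes countable: "countable \<Lambda>"
    and kappa_pos: "\<forall>i\<in>\<Lambda>. \<kappa> i > 0"
    and kappa_bdd: "\<exists>C. \<forall>i\<in>\<Lambda>. \<kappa> i \<le> C"
    and F1: "\<forall>\<alpha>>0. \<forall>k>0. mono (\<phi> \<alpha> k)"
    and F2: "\<forall>\<alpha>>0. \<forall>k>0. \<forall>x y. \<bar>\<phi> \<alpha> k x - \<phi> \<alpha> k y\<bar> \<le> \<bar>x - y\<bar>"
    and F3: "\<forall>\<alpha>>0. \<forall>k>0. \<phi> \<alpha> k 0 = 0"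
  shows "\<forall>\<alpha>>0. \<exists>s :: 'i \<Rightarrow> real \<Rightarrow> ereal.
     (\<forall>i\<in>\<Lambda>. Gamma0_real (s i) \<and> (\<forall>t. s i t \<ge> s i 0) \<and> s i 0 = 0 \<and>
               \<phi> \<alpha> (\<kappa> i) = prox_real (s i))
   \<and> (\<forall>x\<in>l2 \<Lambda>. Reg \<Lambda> \<kappa> s x \<ge> 0) \<and> Gamma0_l2 \<Lambda> (Reg \<Lambda> \<kappa> s)
   \<and> (\<forall>z\<in>l2 \<Lambda>. prox_l2 \<Lambda> (Reg \<Lambda> \<kappa> s) z =
        (\<lambda>i. if i \<in> \<Lambda> then prox_real (\<lambda>t. s i (\<kappa> i * t)) (z i) else 0))
   \<and> (\<forall>z\<in>l2 \<Lambda>. Phi_op \<phi> \<alpha> \<Lambda> \<kappa> z \<in> dom_M_pinv \<Lambda> \<kappa> \<longrightarrow>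
        (let xs = M_pinv \<Lambda> \<kappa> (Phi_op \<phi> \<alpha> \<Lambda> \<kappa> z);
             F = (\<lambda>x. ereal ((l2_norm \<Lambda> (\<lambda>i. M_op \<Lambda> \<kappa> x i - z i))\<^sup>2 / 2) + Reg \<Lambda> \<kappa> s x)
         in xs \<in> l2 \<Lambda> \<and> (\<forall>x\<in>l2 \<Lambda>. F xs \<le> F x)
            \<and> (\<forall>x\<in>l2 \<Lambda>. (\<forall>y\<in>l2 \<Lambda>. F x \<le> F y) \<longrightarrow> x = xs)
            \<and> (\<forall>\<gamma>>0.
                 let T = (\<lambda>x. prox_l2 \<Lambda> (\<lambda>y. ereal \<gamma> * Reg \<Lambda> \<kappa> s y)
                           (\<lambda>i. x i - \<gamma> * M_op \<Lambda> \<kappa> (\<lambda>j. M_op \<Lambda> \<kappa> x j - z j) i))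
                 in T xs = xs \<and> (\<forall>x\<in>l2 \<Lambda>. T x = x \<longrightarrow> x = xs))))"
  apply (intro allI impI)
  subgoal premises \<alpha> for \<alpha>
  proof -
    have "mono_nonexpansive (\<phi> \<alpha> (\<kappa> i))" if "i \<in> \<Lambda>" for i
    proof
      have "0 < \<kappa> i"
        using kappa_pos that by blast
      then show "mono (\<phi> \<alpha> (\<kappa> i))" "\<bar>\<phi> \<alpha> (\<kappa> i) x - \<phi> \<alpha> (\<kappa> i) y\<bar> \<le> \<bar>x - y\<bar>" for x y
        using F1 F2 \<alpha> by blast+
    qed
    then interpret mono_nonexpansive_family \<Lambda> \<kappa> "\<lambda>i. \<phi> \<alpha> (\<kappa> i)"
      by (intro mono_nonexpansive_family.intro) (use kappa_pos kappa_bdd F3 \<alpha> in \<open>auto simp: bdd_above_def\<close>)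
    have sol: "M_pinv \<Lambda> \<kappa> (Phi_op \<phi> \<alpha> \<Lambda> \<kappa> z) = solution z" for z
      by (simp add: solution_def Phi_op_def)
    show ?thesis
      unfolding Let_def dom_M_pinv_def
      using Gamma0_real_pot pot_nonneg pot_zero prox_real_pot Reg_nonneg[of \<Lambda> pot] Gamma0_l2_Reg_pot
        prox_l2_Reg objective_solution_le[unfolded objective_def]
        objective_argmin_unique[unfolded objective_def]
        forward_backward_fixed_point_iff[unfolded forward_backward_def]
      by (intro exI[of _ pot]) (auto simp: sol)
  qed
  done

end
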